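(* Suppose $k_2=1$ and $Q$ is a symmetric positive definite $k\times k$ matrix with $Q_{12}=0$. For every $t\in\mathbb{R}^k$, the function $\gamma\mapsto F_{\infty,\gamma}(t)$, $\gamma\in\mathbb{R}$, is not constant, where $F_{\infty,\gamma}$ is the cdf of $B_\infty\gamma+C_\infty Z_1+[1+\exp(2\alpha)\exp(-\alpha(Z_2+Q_{22}^{1/2}\gamma)^2/\sigma^2)]^{-1}\{D_\infty Z_2-B_\infty\gamma\}$ with $B_\infty=(0_{1\times k_1},-1)'$, $C_\infty=\begin{bmatrix}Q_{11}^{-1/2}\\0_{1\times k_1}\end{bmatrix}$, $D_\infty=(0_{1\times k_1},Q_{22}^{-1/2})'$, and $Z_1\sim N(0,\sigma^2I_{k_1})$, $Z_2\sim N(0,\sigma^2)$ independent. More precisely, $F_{\infty,\gamma}(t)$ differs for some $\gamma\in\mathbb{R}$ from its limit $\lim_{|\gamma|\to\infty}F_{\infty,\gamma}(t)=\mathbb{P}(Q_{11}^{-1/2}Z_1\le t_1)\mathbb{P}(Q_{22}^{-1/2}Z_2\le t_2)$, where $t=(t_1',t_2)'$.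
   Context: $k=k_1+1$, $k_1\ge1$, $\sigma>0$, $\alpha>0$; $Q$ partitioned into $Q_{11}$ ($k_1\times k_1$), $Q_{12}=0$, $Q_{21}=0$, $Q_{22}>0$ scalar. $A^{1/2}$ is the symmetric positive definite root. Vector inequalities are componentwise. *)

theory Defs
  imports "HOL-Probability.Probability"
begin

definition pos_def_mat :: "real^'n^'n \<Rightarrow> bool" where
  "pos_def_mat A \<longleftrightarrow> transpose A = A \<and> (\<forall>x. x \<noteq> 0 \<longrightarrow> x \<bullet> (A *v x) > 0)"

definition mat_sqrt :: "real^'n^'n \<Rightarrow> real^'n^'n" where
  "mat_sqrt A = (THE S. pos_def_mat S \<and> S ** S = A)"

definition mat_inv_sqrt :: "real^'n^'n \<Rightarrow> real^'n^'n" where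
  "mat_inv_sqrt A = matrix_inv (mat_sqrt A)"

definition wgt :: "real \<Rightarrow> real \<Rightarrow> real \<Rightarrow> real \<Rightarrow> real \<Rightarrow> real" where
  "wgt \<alpha> \<sigma> Q22 \<gamma> z =
     inverse (1 + exp (2 * \<alpha>) * exp (- \<alpha> * (z + sqrt Q22 * \<gamma>)\<^sup>2 / \<sigma>\<^sup>2))"

text \<open>The cdf F_{infinity,gamma} at t = (t1', t2)', for the random vector
  B gamma + C Z1 + w (D Z2 - B gamma), whose first k1 components are
  Q11^(-1/2) Z1 and whose last component is -gamma + w (Q22^(-1/2) Z2 + gamma).\<close>
definition F_inf ::
  "'a measure \<Rightarrow> ('a \<Rightarrow> real^'n) \<Rightarrow> ('a \<Rightarrow> real) \<Rightarrow> real^'n^'n \<Rightarrow> real \<Rightarrow> real \<Rightarrow> real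
     \<Rightarrow> real \<Rightarrow> real^'n \<Rightarrow> real \<Rightarrow> real" where
  "F_inf M Z1 Z2 Q11 Q22 \<sigma> \<alpha> \<gamma> t1 t2 =
     measure M {\<omega> \<in> space M.
        (\<forall>i. (mat_inv_sqrt Q11 *v Z1 \<omega>) $ i \<le> t1 $ i) \<and>
        - \<gamma> + wgt \<alpha> \<sigma> Q22 \<gamma> (Z2 \<omega>) * (Z2 \<omega> / sqrt Q22 + \<gamma>) \<le> t2}"

end

theory Submission
  imports Defs "HOL-Real_Asymp.Real_Asymp"
begin

(* Write B = Q11^(-1/2) and h(gamma, z) = -gamma + w(gamma, z) (z / Q22^(1/2) + gamma) for the last
   coordinate. By independence F_{inf,gamma}(t) = P(B Z1 <= t1) P(h(gamma, Z2) <= t2). As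
   |gamma| -> oo the factor 1 - w(gamma, z) decays like exp(-c gamma^2), so h(gamma, z) tends to
   z / Q22^(1/2) and dominated convergence gives the limit. The first factor is positive: B is onto,
   because Q11 has a positive definite square root (spectral theorem), and the Gaussian density is
   positive. For gamma = |t2| + 1 the weight lies in (0, 1), so h(gamma, z) <= t2 whenever
   z / Q22^(1/2) <= t2, and strictly h(gamma, Q22^(1/2) t2) < t2; by continuity the event
   {h(gamma, Z2) <= t2} exceeds {Z2 / Q22^(1/2) <= t2} by an interval of positive Gaussian mass. *)

section \<open>Spectral theorem for self-adjoint operators\<close>

lemma linear_bounded_by_quadratic_eq_0:
  fixes a c :: real
  assumes "\<And>t. 2 * t * a \<le> t\<^sup>2 * c"
  shows "a = 0"
proof (rule ccontr)
  assume "a \<noteq> 0"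
  define d where "d = \<bar>c\<bar> + 1"
  have "d > 0" unfolding d_def by simp
  have "2 * (a / d) * a \<le> (a / d)\<^sup>2 * c" by (rule assms)
  then have "2 * a\<^sup>2 * d \<le> a\<^sup>2 * c"
    using \<open>d > 0\<close> by (simp add: field_simps power2_eq_square)
  then have "2 * d \<le> c" using \<open>a \<noteq> 0\<close> by simp
  then show False unfolding d_def by (cases "c \<ge> 0") auto
qed

lemma rayleigh_quotient_maximizer:
  fixes f :: "'a::euclidean_space \<Rightarrow> 'a"
  assumes lin: "linear f" and V: "subspace V" "V \<noteq> {0}"
  obtains v where "v \<in> V" "norm v = 1"
    "\<And>y. y \<in> V \<Longrightarrow> y \<bullet> f y \<le> (v \<bullet> f v) * (y \<bullet> y)"
proof -
  define K where "K = sphere 0 1 \<inter> V"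
  have "compact K"
    unfolding K_def by (intro compact_Int_closed compact_sphere closed_subspace V)
  obtain x where "x \<in> V" "x \<noteq> 0"
    using V subspace_0 by blast
  then have "x /\<^sub>R norm x \<in> K"
    unfolding K_def using V by (simp add: subspace_scale)
  then have "K \<noteq> {}" by blast
  moreover have "continuous_on K (\<lambda>x. x \<bullet> f x)"
    using lin by (intro continuous_intros linear_continuous_on linear_conv_bounded_linear[THEN iffD1])
  ultimately obtain v where "v \<in> K" and max: "\<And>y. y \<in> K \<Longrightarrow> y \<bullet> f y \<le> v \<bullet> f v"
    using continuous_attains_sup[OF \<open>compact K\<close>] by blast
  have "y \<bullet> f y \<le> (v \<bullet> f v) * (y \<bullet> y)" if "y \<in> V" for y
  proof (cases "y = 0")
    case False
    then have "y /\<^sub>R norm y \<in> K"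
      unfolding K_def using V \<open>y \<in> V\<close> by (simp add: subspace_scale)
    then have "(y /\<^sub>R norm y) \<bullet> f (y /\<^sub>R norm y) \<le> v \<bullet> f v"
      by (rule max)
    moreover have "y \<bullet> f y = (y \<bullet> y) * ((y /\<^sub>R norm y) \<bullet> f (y /\<^sub>R norm y))"
      using lin False by (simp add: linear_scale dot_square_norm power2_eq_square field_simps)
    ultimately show ?thesis
      by (metis inner_ge_zero mult.commute mult_left_mono)
  qed (simp add: linear_0[OF lin])
  with \<open>v \<in> K\<close> show ?thesis
    unfolding K_def by (intro that) auto
qed

lemma self_adjoint_eigenvector:
  fixes f :: "'a::euclidean_space \<Rightarrow> 'a"
  assumes lin: "linear f" and adj: "\<And>x y. x \<bullet> f y = f x \<bullet> y"
    and V: "subspace V" and inv: "f ` V \<subseteq> V" and nontriv: "V \<noteq> {0}"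
  shows "\<exists>v\<in>V. norm v = 1 \<and> (\<exists>c. f v = c *\<^sub>R v)"
proof -
  obtain v where vV: "v \<in> V" and nv: "norm v = 1"
    and max: "\<And>y. y \<in> V \<Longrightarrow> y \<bullet> f y \<le> (v \<bullet> f v) * (y \<bullet> y)"
    using rayleigh_quotient_maximizer[OF lin V nontriv] by blast
  define l where "l = v \<bullet> f v"
  have vv: "v \<bullet> v = 1"
    using nv by (simp add: norm_eq_1)
  define w where "w = f v - l *\<^sub>R v"
  have wV: "w \<in> V"
    unfolding w_def using V inv vV by (simp add: subspace_diff subspace_scale image_subset_iff)
  have wv: "w \<bullet> v = 0"
    unfolding w_def l_def using vv by (simp add: inner_diff_left inner_commute[of "f v" v])
  have wfv: "w \<bullet> f v = w \<bullet> w"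
    using wv unfolding w_def by (simp add: inner_diff_right inner_commute)
  \<comment> \<open>maximality along the line \<open>v + t w\<close> makes the first-order term vanish\<close>
  have "2 * t * (w \<bullet> w) \<le> t\<^sup>2 * (l * (w \<bullet> w) - w \<bullet> f w)" for t
  proof -
    have "(v + t *\<^sub>R w) \<bullet> f (v + t *\<^sub>R w) \<le> l * ((v + t *\<^sub>R w) \<bullet> (v + t *\<^sub>R w))"
      unfolding l_def using V vV wV by (intro max) (simp add: subspace_add subspace_scale)
    then show ?thesis
      using lin adj[of v w] wv vv wfv unfolding l_def
      by (simp add: linear_add linear_scale inner_add_left inner_add_right inner_commute
          power2_eq_square algebra_simps)
  qed
  then have "w \<bullet> w = 0" by (rule linear_bounded_by_quadratic_eq_0)
  then show ?thesis
    using vV nv unfolding w_def by auto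
qed

lemma self_adjoint_invariant_orthogonal_complement:
  fixes f :: "'a::real_inner \<Rightarrow> 'a"
  assumes adj: "\<And>x y. x \<bullet> f y = f x \<bullet> y" and "f ` V \<subseteq> V" and ev: "f v = c *\<^sub>R v"
  shows "f ` (V \<inter> {x. x \<bullet> v = 0}) \<subseteq> V \<inter> {x. x \<bullet> v = 0}"
proof
  fix y assume "y \<in> f ` (V \<inter> {x. x \<bullet> v = 0})"
  then obtain x where "x \<in> V" "x \<bullet> v = 0" "y = f x" by blast
  moreover have "f x \<bullet> v = x \<bullet> (c *\<^sub>R v)"
    by (metis adj ev)
  ultimately show "y \<in> V \<inter> {x. x \<bullet> v = 0}"
    using assms(2) by auto
qed

lemma span_insert_orthogonal_complement:
  fixes v :: "'a::real_inner"
  assumes V: "subspace V" "v \<in> V" and nv: "norm v = 1" and B: "span B = V \<inter> {x. x \<bullet> v = 0}"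
  shows "span (insert v B) = V"
proof
  have "B \<subseteq> V"
    using B span_superset by blast
  with V show "span (insert v B) \<subseteq> V"
    by (intro span_minimal) auto
  show "V \<subseteq> span (insert v B)"
  proof
    fix x assume "x \<in> V"
    then have "x - (x \<bullet> v) *\<^sub>R v \<in> span B"
      unfolding B using V nv by (simp add: subspace_diff subspace_scale inner_diff_left norm_eq_1)
    then have "x - (x \<bullet> v) *\<^sub>R v \<in> span (insert v B)"
      using span_mono[of B "insert v B"] by auto
    then show "x \<in> span (insert v B)"
      by (metis diff_add_cancel span_add span_base span_scale insertI1)
  qed
qed

lemma self_adjoint_orthonormal_eigenbasis:
  fixes f :: "'a::euclidean_space \<Rightarrow> 'a"
  assumes lin: "linear f" and adj: "\<And>x y. x \<bullet> f y = f x \<bullet> y"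
    and "subspace V" and "f ` V \<subseteq> V"
  shows "\<exists>B\<subseteq>V. finite B \<and> pairwise orthogonal B \<and> span B = V \<and>
           (\<forall>b\<in>B. norm b = 1 \<and> (\<exists>c. f b = c *\<^sub>R b))"
  using assms(3,4)
proof (induction "dim V" arbitrary: V rule: less_induct)
  case less
  show ?case
  proof (cases "V = {0}")
    case True
    then show ?thesis by (intro exI[of _ "{}"]) auto
  next
    case False
    obtain v c where vV: "v \<in> V" and nv: "norm v = 1" and ev: "f v = c *\<^sub>R v"
      using self_adjoint_eigenvector[OF lin adj less.prems False] by blast
    define W where "W = V \<inter> {x. x \<bullet> v = 0}"
    have "subspace W"
      unfolding W_def using less.prems(1) by (auto simp: subspace_def inner_add_left)
    moreover have "f ` W \<subseteq> W"
      unfolding W_def using adj less.prems(2) ev by (rule self_adjoint_invariant_orthogonal_complement)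
    moreover have "dim W < dim V"
    proof -
      have "W \<subset> V" using vV nv unfolding W_def by (force simp: norm_eq_1)
      then show ?thesis
        using dim_psubset span_eq_iff less.prems(1) \<open>subspace W\<close> by metis
    qed
    ultimately obtain B where B: "B \<subseteq> W" "finite B" "pairwise orthogonal B" "span B = W"
      "\<forall>b\<in>B. norm b = 1 \<and> (\<exists>c. f b = c *\<^sub>R b)"
      using less.hyps by blast
    have "span (insert v B) = V"
      using less.prems(1) vV nv B(4) unfolding W_def by (rule span_insert_orthogonal_complement)
    then show ?thesis
      using B vV nv ev span_superset unfolding W_def
      by (intro exI[of _ "insert v B"]) (auto simp: pairwise_insert orthogonal_def inner_commute)
  qed
qed

section \<open>Positive definite square roots\<close>

lemma symmetric_matrix_self_adjoint:
  fixes A :: "real^'n^'n"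
  assumes "transpose A = A"
  shows "x \<bullet> (A *v y) = (A *v x) \<bullet> y"
  by (metis assms dot_lmul_matrix transpose_matrix_vector)

lemma self_adjoint_imp_symmetric_matrix:
  fixes A :: "real^'n^'n"
  assumes "\<And>x y. x \<bullet> (A *v y) = (A *v x) \<bullet> y"
  shows "transpose A = A"
  unfolding matrix_eq
proof
  fix x
  have "(transpose A *v x - A *v x) \<bullet> y = 0" for y
    using assms[of x y] by (simp add: inner_diff_left dot_lmul_matrix[symmetric])
  from this[of "transpose A *v x - A *v x"] show "transpose A *v x = A *v x" by simp
qed

lemma orthonormal_basis_pos_def_mat:
  fixes B :: "(real^'n) set"
  assumes B: "finite B" "pairwise orthogonal B" "span B = UNIV" "\<And>b. b \<in> B \<Longrightarrow> norm b = 1"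
    and c: "\<And>b. b \<in> B \<Longrightarrow> c b > 0"
  shows "\<exists>D. pos_def_mat D \<and> (\<forall>b\<in>B. D *v b = c b *\<^sub>R b)"
proof -
  have orthonormal: "b \<bullet> b' = (if b' = b then 1 else 0)" if "b \<in> B" "b' \<in> B" for b b'
    using B that by (auto simp: pairwise_def orthogonal_def norm_eq_1)
  have expand: "(\<Sum>b\<in>B. (x \<bullet> b) *\<^sub>R b) = x" for x
    using B by (intro orthonormal_basis_expand) auto
  define g where "g x = (\<Sum>b\<in>B. (c b * (x \<bullet> b)) *\<^sub>R b)" for x
  have "linear g"
    unfolding g_def
    by (intro linearI) (simp_all add: inner_add_left algebra_simps sum.distrib scaleR_sum_right)
  then have D: "matrix g *v x = g x" for x
    by (simp add: matrix_works linear_matrix_vector_mul_eq)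
  have g_inner: "x \<bullet> g y = (\<Sum>b\<in>B. c b * (x \<bullet> b) * (y \<bullet> b))" for x y
    unfolding g_def by (simp add: inner_sum_right inner_commute mult_ac)
  have "pos_def_mat (matrix g)"
    unfolding pos_def_mat_def
  proof (intro conjI allI impI)
    show "transpose (matrix g) = matrix g"
      by (rule self_adjoint_imp_symmetric_matrix) (simp add: D g_inner inner_commute mult_ac)
    fix x :: "real^'n"
    assume "x \<noteq> 0"
    then obtain b0 where "b0 \<in> B" "x \<bullet> b0 \<noteq> 0"
      using expand[of x] by (metis (no_types, lifting) scale_eq_0_iff sum.neutral)
    then have "0 < (\<Sum>b\<in>B. c b * (x \<bullet> b)\<^sup>2)"
      using B(1) c by (intro sum_pos2[of B b0]) (auto simp: less_imp_le)
    then show "x \<bullet> (matrix g *v x) > 0"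
      by (simp add: D g_inner power2_eq_square mult.assoc)
  qed
  moreover have "g b = c b *\<^sub>R b" if "b \<in> B" for b
  proof -
    have "g b = (\<Sum>b'\<in>B. if b' = b then c b *\<^sub>R b else 0)"
      unfolding g_def by (intro sum.cong refl) (simp add: orthonormal[OF that])
    then show ?thesis
      using B(1) that by simp
  qed
  ultimately show ?thesis
    by (auto simp: D)
qed

lemma pos_def_mat_sqrt_exists:
  fixes Q :: "real^'n^'n"
  assumes Q: "pos_def_mat Q"
  shows "\<exists>S. pos_def_mat S \<and> S ** S = Q"
proof -
  have adj: "\<And>x y. x \<bullet> (Q *v y) = (Q *v x) \<bullet> y"
    using Q by (simp add: pos_def_mat_def symmetric_matrix_self_adjoint)
  obtain B where B: "finite B" "pairwise orthogonal B" "span B = UNIV"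
      and nB: "\<And>b. b \<in> B \<Longrightarrow> norm b = 1" and "\<forall>b\<in>B. \<exists>c. Q *v b = c *\<^sub>R b"
    using self_adjoint_orthonormal_eigenbasis[of "(*v) Q" UNIV] adj by auto
  then obtain l where Ql: "\<And>b. b \<in> B \<Longrightarrow> Q *v b = l b *\<^sub>R b"
    by metis
  have lpos: "l b > 0" if "b \<in> B" for b
  proof -
    have "b \<bullet> (Q *v b) > 0"
      using Q nB[OF that] unfolding pos_def_mat_def by (metis norm_zero zero_neq_one)
    then show ?thesis
      using nB[OF that] by (simp add: Ql[OF that] norm_eq_1)
  qed
  obtain S where S: "pos_def_mat S" and Sb: "\<And>b. b \<in> B \<Longrightarrow> S *v b = sqrt (l b) *\<^sub>R b"
    using orthonormal_basis_pos_def_mat[OF B nB, of "\<lambda>b. sqrt (l b)"] lpos by auto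
  have "(S ** S) *v x = Q *v x" for x
  proof (rule linear_eq_on_span[of "(*v) (S ** S)" "(*v) Q"])
    show "(S ** S) *v b = Q *v b" if "b \<in> B" for b
      using that lpos[OF that]
      by (simp add: Sb Ql matrix_vector_mult_scaleR flip: matrix_vector_mul_assoc)
  qed (simp_all add: B)
  with S show ?thesis
    by (auto simp: matrix_eq)
qed

lemma pos_def_mat_square_eq_imp_eq:
  fixes S T :: "real^'n^'n"
  assumes S: "pos_def_mat S" and T: "pos_def_mat T" and ST: "S ** S = T ** T"
  shows "S = T"
proof -
  define X where "X = S - T"
  have adj: "\<And>x y. x \<bullet> (X *v y) = (X *v x) \<bullet> y"
    using S T unfolding X_def pos_def_mat_def
    by (simp add: matrix_vector_mult_diff_rdistrib inner_diff_left inner_diff_right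
        symmetric_matrix_self_adjoint)
  obtain B where B: "span B = UNIV"
      and XB: "\<And>b. b \<in> B \<Longrightarrow> norm b = 1 \<and> (\<exists>c. X *v b = c *\<^sub>R b)"
    using self_adjoint_orthonormal_eigenbasis[of "(*v) X" UNIV] adj by auto
  have kernel: "X *v b = 0" if b: "b \<in> B" for b
  proof -
    obtain \<mu> where Xb: "X *v b = \<mu> *\<^sub>R b"
      using XB[OF b] by blast
    have "b \<noteq> 0"
      using XB[OF b] by auto
    \<comment> \<open>\<open>X\<close> solves \<open>S X + X T = S\<^sup>2 - T\<^sup>2 = 0\<close>; on the eigenvector \<open>b\<close> this forces \<open>\<mu> = 0\<close>\<close>
    have "S *v (X *v b) + X *v (T *v b) = (S ** S) *v b - (T ** T) *v b"
      unfolding X_def by (simp add: matrix_vector_mult_diff_rdistrib matrix_vector_mult_diff_distrib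
          flip: matrix_vector_mul_assoc)
    then have "b \<bullet> (S *v (X *v b) + X *v (T *v b)) = 0"
      using ST by simp
    then have "b \<bullet> (S *v (X *v b)) + (X *v b) \<bullet> (T *v b) = 0"
      by (simp add: inner_add_right adj)
    then have "\<mu> * (b \<bullet> (S *v b) + b \<bullet> (T *v b)) = 0"
      by (simp add: Xb matrix_vector_mult_scaleR algebra_simps)
    moreover have "b \<bullet> (S *v b) + b \<bullet> (T *v b) > 0"
      using S T \<open>b \<noteq> 0\<close> unfolding pos_def_mat_def by (simp add: add_pos_pos)
    ultimately show ?thesis
      using Xb by simp
  qed
  have "X *v x = 0" for x
    by (rule linear_eq_0_on_span[of "(*v) X" B]) (use B kernel in auto)
  then show ?thesis
    unfolding X_def by (simp add: matrix_eq matrix_vector_mult_diff_rdistrib)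
qed

lemma mat_sqrt:
  fixes Q :: "real^'n^'n"
  assumes "pos_def_mat Q"
  shows "pos_def_mat (mat_sqrt Q) \<and> mat_sqrt Q ** mat_sqrt Q = Q"
  unfolding mat_sqrt_def
proof (rule theI')
  show "\<exists>!S. pos_def_mat S \<and> S ** S = Q"
    using pos_def_mat_sqrt_exists[OF assms]
    by (rule ex_ex1I) (metis pos_def_mat_square_eq_imp_eq)
qed

lemma pos_def_mat_invertible:
  fixes A :: "real^'n^'n"
  assumes "pos_def_mat A"
  shows "invertible A"
proof -
  have "inj ((*v) A)"
  proof (rule injI)
    fix x y assume "A *v x = A *v y"
    then have "(x - y) \<bullet> (A *v (x - y)) = 0"
      by (simp add: matrix_vector_mult_diff_distrib)
    then show "x = y"
      using assms unfolding pos_def_mat_def by (metis less_irrefl right_minus_eq)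
  qed
  then show ?thesis
    using invertible_left_inverse matrix_left_invertible_injective by blast
qed

lemma surj_mat_inv_sqrt:
  fixes Q :: "real^'n^'n"
  assumes "pos_def_mat Q"
  shows "surj ((*v) (mat_inv_sqrt Q))"
proof -
  define S where "S = mat_sqrt Q"
  have "invertible S"
    unfolding S_def using mat_sqrt[OF assms] by (blast intro: pos_def_mat_invertible)
  then have "matrix_inv S ** S = mat 1"
    unfolding invertible_def matrix_inv_def by (rule someI2_ex) blast
  then have "mat_inv_sqrt Q *v (S *v y) = y" for y
    unfolding mat_inv_sqrt_def S_def[symmetric] by (simp add: matrix_vector_mul_assoc)
  then show ?thesis
    by (metis surjI)
qed

section \<open>Measure-theoretic tools\<close>

lemma emeasure_density_lborel_pos:
  fixes f :: "'a::euclidean_space \<Rightarrow> real"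
  assumes f: "f \<in> borel_measurable lborel" "\<And>x. f x > 0"
    and A: "A \<in> sets borel" and U: "open U" "x \<in> U" "U \<subseteq> A"
  shows "emeasure (density lborel (\<lambda>x. ennreal (f x))) A > 0"
proof (rule ccontr)
  assume "\<not> ?thesis"
  then have "(\<integral>\<^sup>+ x. ennreal (f x) * indicator A x \<partial>lborel) = 0"
    using A f by (simp add: emeasure_density)
  then have "AE y in lborel. ennreal (f y) * indicator A y = 0"
    using A f by (subst (asm) nn_integral_0_iff_AE) auto
  then have "AE y in lborel. y \<in> - U"
  proof eventually_elim
    case (elim y)
    then have "y \<notin> A"
      using f(2)[of y] by (auto simp: indicator_def split: if_splits)
    then show ?case
      using U(3) by auto
  qed
  then have "x \<in> - U"
    using U(1) by (intro mem_closed_if_AE_lebesgue AE_completion) auto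
  then show False
    using U(2) by simp
qed

lemma integral_dominated_convergence_at_infinity:
  fixes s :: "real \<Rightarrow> 'a \<Rightarrow> 'b::{banach, second_countable_topology}"
  assumes "f \<in> borel_measurable M" "\<And>t. s t \<in> borel_measurable M" "integrable M w"
    and lim: "AE x in M. ((\<lambda>t. s t x) \<longlongrightarrow> f x) at_infinity"
    and bound: "\<And>t. AE x in M. norm (s t x) \<le> w x"
  shows "((\<lambda>t. integral\<^sup>L M (s t)) \<longlongrightarrow> integral\<^sup>L M f) at_infinity"
proof -
  \<comment> \<open>\<open>at_infinity = sup at_top at_bot\<close>, and \<open>c = -1\<close> reflects \<open>at_bot\<close> to \<open>at_top\<close>\<close>
  have "((\<lambda>t. integral\<^sup>L M (s (c * t))) \<longlongrightarrow> integral\<^sup>L M f) at_top"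
    if "c = 1 \<or> c = -1" for c :: real
  proof (rule integral_dominated_convergence_at_top[where w = w])
    have c: "filterlim (\<lambda>t. c * t) at_infinity at_top"
      using that filterlim_mono[OF filterlim_ident at_top_le_at_infinity order_refl]
        filterlim_mono[OF filterlim_uminus_at_bot_at_top at_bot_le_at_infinity order_refl]
      by auto
    show "AE x in M. ((\<lambda>t. s (c * t) x) \<longlongrightarrow> f x) at_top"
      using lim by eventually_elim (rule filterlim_compose[OF _ c])
  qed (use assms in auto)
  from this[of 1] this[of "-1"] show ?thesis
    unfolding at_infinity_eq_at_top_bot
    by (intro filterlim_sup) (simp_all add: filterlim_at_bot_mirror)
qed

lemma (in finite_measure) tendsto_measure_at_infinity:
  fixes A :: "real \<Rightarrow> 'a set"
  assumes sets: "\<And>t. A t \<in> sets M" "B \<in> sets M"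
    and lim: "AE x in M. \<forall>\<^sub>F t in at_infinity. x \<in> A t \<longleftrightarrow> x \<in> B"
  shows "((\<lambda>t. measure M (A t)) \<longlongrightarrow> measure M B) at_infinity"
proof -
  have "((\<lambda>t. integral\<^sup>L M (indicator (A t) :: 'a \<Rightarrow> real)) \<longlongrightarrow> integral\<^sup>L M (indicator B))
      at_infinity"
  proof (rule integral_dominated_convergence_at_infinity[where s = "\<lambda>t. indicator (A t)" and w = "\<lambda>_. 1"])
    show "AE x in M. ((\<lambda>t. indicator (A t) x :: real) \<longlongrightarrow> indicator B x) at_infinity"
      using lim by eventually_elim (auto intro: tendsto_eventually elim: eventually_mono simp: indicator_def)
  qed (use sets in auto)
  then show ?thesis
    using sets by simp
qed

lemma measure_distributed:
  assumes "distributed M N X f" "A \<in> sets N"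
  shows "measure M {\<omega> \<in> space M. X \<omega> \<in> A} = measure (density N f) A"
proof -
  have "{\<omega> \<in> space M. X \<omega> \<in> A} = X -` A \<inter> space M" by blast
  then show ?thesis
    using assms by (simp add: measure_distr distributed_measurable flip: distributed_distr_eq_density)
qed

lemma measure_lower_orthant_pos:
  fixes B :: "real^'n^'m" and Z :: "'a \<Rightarrow> real^'n" and t :: "real^'m"
  assumes "prob_space M" and Z: "distributed M lborel Z (\<lambda>x. ennreal (f x))"
    and f: "\<And>x. f x > 0" and B: "surj ((*v) B)"
  shows "measure M {\<omega> \<in> space M. \<forall>i. (B *v Z \<omega>) $ i \<le> t $ i} > 0"
proof -
  define C where "C = {x. \<forall>i. (B *v x) $ i \<le> t $ i}"
  define U where "U = {x. \<forall>i. (B *v x) $ i < t $ i}"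
  have "C \<in> sets borel"
    unfolding C_def by (intro borel_closed closed_Collect_all closed_Collect_le continuous_intros)
  have "open U"
  proof -
    have "U = (\<Inter>i. {x. (B *v x) $ i < t $ i})"
      unfolding U_def by auto
    then show ?thesis
      by (auto intro!: open_INT open_Collect_less continuous_intros)
  qed
  obtain x where "B *v x = t - 1"
    using B by (metis surjD)
  then have "x \<in> U" "U \<subseteq> C"
    unfolding U_def C_def by (auto intro: less_imp_le)
  moreover have "f \<in> borel_measurable lborel"
    using Z f by (intro distributed_real_measurable[OF _ Z]) (auto intro: less_imp_le)
  ultimately have "emeasure (density lborel (\<lambda>x. ennreal (f x))) C > 0"
    using \<open>C \<in> sets borel\<close> \<open>open U\<close> f by (intro emeasure_density_lborel_pos) auto
  moreover have "prob_space (density lborel (\<lambda>x. ennreal (f x)))"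
    using prob_space.prob_space_distr[OF assms(1) distributed_measurable[OF Z]] Z
    by (simp add: distributed_distr_eq_density)
  ultimately show ?thesis
    using measure_distributed[OF Z, of C] \<open>C \<in> sets borel\<close>
    by (simp add: C_def finite_measure.emeasure_eq_measure prob_space.finite_measure)
qed

section \<open>The last coordinate\<close>

definition last_coordinate :: "real \<Rightarrow> real \<Rightarrow> real \<Rightarrow> real \<Rightarrow> real \<Rightarrow> real" where
  "last_coordinate \<alpha> \<sigma> q \<gamma> z = - \<gamma> + wgt \<alpha> \<sigma> q \<gamma> z * (z / sqrt q + \<gamma>)"

lemma borel_measurable_last_coordinate [measurable]:
  "last_coordinate \<alpha> \<sigma> q \<gamma> \<in> borel_measurable borel"
  unfolding last_coordinate_def[abs_def] wgt_def by measurable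

lemma wgt_bounds: "0 < wgt \<alpha> \<sigma> q \<gamma> z" "wgt \<alpha> \<sigma> q \<gamma> z < 1"
  unfolding wgt_def by (simp_all add: add_pos_pos inverse_less_1_iff)

lemma last_coordinate_tendsto:
  assumes "\<alpha> > 0" "\<sigma> > 0" "q > 0"
  shows "((\<lambda>\<gamma>. last_coordinate \<alpha> \<sigma> q \<gamma> z) \<longlongrightarrow> z / sqrt q) at_infinity"
proof -
  have "((\<lambda>\<gamma>. last_coordinate \<alpha> \<sigma> q \<gamma> z) \<longlongrightarrow> z / sqrt q) F" if "F = at_top \<or> F = at_bot" for F
    using that assms unfolding last_coordinate_def wgt_def by (auto, (real_asymp simp: sqrt_def)+)
  then show ?thesis
    unfolding at_infinity_eq_at_top_bot by (intro filterlim_sup) auto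
qed

lemma last_coordinate_le:
  assumes "t + \<gamma> \<ge> 0" "z / sqrt q \<le> t"
  shows "last_coordinate \<alpha> \<sigma> q \<gamma> z \<le> t"
proof -
  define u where "u = z / sqrt q + \<gamma>"
  have "wgt \<alpha> \<sigma> q \<gamma> z * u \<le> t + \<gamma>"
  proof (cases "u \<ge> 0")
    case True
    then have "wgt \<alpha> \<sigma> q \<gamma> z * u \<le> u"
      using wgt_bounds[of \<alpha> \<sigma> q \<gamma> z] by (simp add: mult_left_le_one_le less_imp_le)
    then show ?thesis
      using assms(2) unfolding u_def by linarith
  next
    case False
    then have "wgt \<alpha> \<sigma> q \<gamma> z * u < 0"
      using wgt_bounds(1) by (simp add: mult_pos_neg)
    then show ?thesis
      using assms(1) by linarith
  qed
  then show ?thesis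
    unfolding last_coordinate_def u_def by simp
qed

lemma last_coordinate_less:
  assumes "q > 0" "t + \<gamma> > 0"
  shows "last_coordinate \<alpha> \<sigma> q \<gamma> (sqrt q * t) < t"
proof -
  have "wgt \<alpha> \<sigma> q \<gamma> (sqrt q * t) * (t + \<gamma>) < t + \<gamma>"
    using mult_strict_right_mono[OF wgt_bounds(2) assms(2)] by simp
  then show ?thesis
    unfolding last_coordinate_def using assms(1) by (simp; linarith)
qed

lemma last_coordinate_gap:
  assumes "q > 0"
  obtains \<gamma> U where "open U" "U \<noteq> {}" "U \<inter> {z. z / sqrt q \<le> t} = {}"
    "{z. z / sqrt q \<le> t} \<union> U \<subseteq> {z. last_coordinate \<alpha> \<sigma> q \<gamma> z \<le> t}"
proof -
  define \<gamma> where "\<gamma> = \<bar>t\<bar> + 1"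
  define U where "U = {z. sqrt q * t < z \<and> last_coordinate \<alpha> \<sigma> q \<gamma> z < t}"
  have cont: "continuous_on UNIV (last_coordinate \<alpha> \<sigma> q \<gamma>)"
    unfolding last_coordinate_def[abs_def] wgt_def divide_inverse
    by (intro continuous_intros) (smt (verit) exp_gt_zero mult_pos_pos)
  have "open U"
    unfolding U_def using cont
    by (intro open_Collect_conj open_Collect_less continuous_intros)
       (auto simp: continuous_on_eq_continuous_at)
  moreover have "U \<noteq> {}"
  proof -
    \<comment> \<open>the strict inequality at the threshold \<open>z = sqrt q * t\<close> persists to its right\<close>
    have "\<forall>\<^sub>F z in at (sqrt q * t). last_coordinate \<alpha> \<sigma> q \<gamma> z < t"
      using cont last_coordinate_less[OF assms, of t \<gamma>] unfolding \<gamma>_def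
      by (intro order_tendstoD(2)) (auto simp: continuous_on_eq_continuous_at isCont_def)
    then have "\<forall>\<^sub>F z in at_right (sqrt q * t). sqrt q * t < z \<and> last_coordinate \<alpha> \<sigma> q \<gamma> z < t"
      by (intro eventually_conj eventually_at_right_less) (simp add: eventually_at_split)
    then show ?thesis
      unfolding U_def by (auto dest: eventually_happens)
  qed
  moreover have "U \<inter> {z. z / sqrt q \<le> t} = {}"
    unfolding U_def using assms by (auto simp: field_simps)
  moreover have "{z. z / sqrt q \<le> t} \<union> U \<subseteq> {z. last_coordinate \<alpha> \<sigma> q \<gamma> z \<le> t}"
    unfolding U_def \<gamma>_def by (auto intro: last_coordinate_le)
  ultimately show ?thesis
    by (rule that)
qed

lemma normal_measure_last_coordinate_tendsto:
  assumes "\<alpha> > 0" "\<sigma> > 0" "q > 0" "\<tau> > 0"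
  defines "N \<equiv> density lborel (\<lambda>x. ennreal (normal_density 0 \<tau> x))"
  shows "((\<lambda>\<gamma>. measure N {z. last_coordinate \<alpha> \<sigma> q \<gamma> z \<le> t}) \<longlongrightarrow> measure N {z. z / sqrt q \<le> t})
           at_infinity"
proof -
  interpret prob_space N
    unfolding N_def using assms(4) by (rule prob_space_normal_density)
  have "AE z in N. z \<noteq> sqrt q * t"
    unfolding N_def using AE_lborel_singleton[of "sqrt q * t"]
    by (subst AE_density) (auto elim!: eventually_mono)
  then have "AE z in N. \<forall>\<^sub>F \<gamma> in at_infinity.
      last_coordinate \<alpha> \<sigma> q \<gamma> z \<le> t \<longleftrightarrow> z / sqrt q \<le> t"
  proof eventually_elim
    case (elim z)
    note lim = last_coordinate_tendsto[OF assms(1-3), of z]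
    have "z / sqrt q \<noteq> t"
      using elim assms(3) by (auto simp: field_simps)
    then consider "z / sqrt q < t" | "z / sqrt q > t" by linarith
    then show ?case
    proof cases
      case 1
      show ?thesis
        using order_tendstoD(2)[OF lim 1] by eventually_elim (use 1 in auto)
    next
      case 2
      show ?thesis
        using order_tendstoD(1)[OF lim 2] by eventually_elim (use 2 in auto)
    qed
  qed
  moreover have "{z. last_coordinate \<alpha> \<sigma> q \<gamma> z \<le> t} \<in> sets N" for \<gamma>
    unfolding N_def by measurable
  moreover have "{z. z / sqrt q \<le> t} \<in> sets N"
    unfolding N_def by measurable
  ultimately show ?thesis
    by (intro tendsto_measure_at_infinity) auto
qed

lemma normal_measure_last_coordinate_gap:
  assumes "q > 0" "\<tau> > 0"
  defines "N \<equiv> density lborel (\<lambda>x. ennreal (normal_density 0 \<tau> x))"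
  shows "\<exists>\<gamma>. measure N {z. z / sqrt q \<le> t} < measure N {z. last_coordinate \<alpha> \<sigma> q \<gamma> z \<le> t}"
proof -
  interpret prob_space N
    unfolding N_def using assms(2) by (rule prob_space_normal_density)
  obtain \<gamma> U where U: "open U" "U \<noteq> {}" "U \<inter> {z. z / sqrt q \<le> t} = {}"
    and sub: "{z. z / sqrt q \<le> t} \<union> U \<subseteq> {z. last_coordinate \<alpha> \<sigma> q \<gamma> z \<le> t}"
    using last_coordinate_gap[OF assms(1)] .
  have sets: "{z. z / sqrt q \<le> t} \<in> events" "{z. last_coordinate \<alpha> \<sigma> q \<gamma> z \<le> t} \<in> events"
    unfolding N_def by measurable
  have "U \<in> events"
    unfolding N_def using U(1) by simp
  obtain x where "x \<in> U"
    using U(2) by blast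
  then have "emeasure N U > 0"
    unfolding N_def using U(1) assms(2)
    by (intro emeasure_density_lborel_pos) (auto simp: normal_density_pos)
  then have "measure N {z. z / sqrt q \<le> t} < measure N ({z. z / sqrt q \<le> t} \<union> U)"
    using sets \<open>U \<in> events\<close> U(3) by (simp add: emeasure_eq_measure finite_measure_Union Int_commute)
  also have "\<dots> \<le> measure N {z. last_coordinate \<alpha> \<sigma> q \<gamma> z \<le> t}"
    using sets sub by (intro finite_measure_mono) auto
  finally show ?thesis by blast
qed

lemma F_inf_eq_mult:
  assumes Z2: "distributed M lborel Z2 (\<lambda>x. ennreal (g x))"
    and indep: "\<forall>A \<in> sets borel. \<forall>B \<in> sets borel. measure M (Z1 -` A \<inter> Z2 -` B \<inter> space M) =
      measure M (Z1 -` A \<inter> space M) * measure M (Z2 -` B \<inter> space M)"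
  shows "F_inf M Z1 Z2 Q11 Q22 \<sigma> \<alpha> \<gamma> t1 t2 =
    measure M {\<omega> \<in> space M. \<forall>i. (mat_inv_sqrt Q11 *v Z1 \<omega>) $ i \<le> t1 $ i} *
    measure (density lborel (\<lambda>x. ennreal (g x))) {z. last_coordinate \<alpha> \<sigma> Q22 \<gamma> z \<le> t2}"
proof -
  define C where "C = {x. \<forall>i. (mat_inv_sqrt Q11 *v x) $ i \<le> t1 $ i}"
  define D where "D = {z. last_coordinate \<alpha> \<sigma> Q22 \<gamma> z \<le> t2}"
  have "closed C"
    unfolding C_def by (intro closed_Collect_all closed_Collect_le continuous_intros)
  moreover have "D \<in> sets borel"
    unfolding D_def by measurable
  ultimately have "measure M (Z1 -` C \<inter> Z2 -` D \<inter> space M) =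
      measure M (Z1 -` C \<inter> space M) * measure M (Z2 -` D \<inter> space M)"
    using indep by (simp add: borel_closed)
  moreover have "F_inf M Z1 Z2 Q11 Q22 \<sigma> \<alpha> \<gamma> t1 t2 = measure M (Z1 -` C \<inter> Z2 -` D \<inter> space M)"
    unfolding F_inf_def C_def D_def last_coordinate_def by (rule arg_cong[where f = "measure M"]) auto
  moreover have "{\<omega> \<in> space M. \<forall>i. (mat_inv_sqrt Q11 *v Z1 \<omega>) $ i \<le> t1 $ i} = Z1 -` C \<inter> space M"
    unfolding C_def by auto
  moreover have "measure M (Z2 -` D \<inter> space M) = measure (density lborel (\<lambda>x. ennreal (g x))) D"
    using measure_distributed[OF Z2, of D] \<open>D \<in> sets borel\<close> by (simp add: vimage_def Int_def conj_commute)
  ultimately show ?thesis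
    unfolding D_def[symmetric] by simp
qed

theorem mainTheorem9:
  fixes M :: "'a measure"
    and Z1 :: "'a \<Rightarrow> real^'n" and Z2 :: "'a \<Rightarrow> real"
    and Q11 :: "real^'n^'n" and Q22 \<sigma> \<alpha> :: real
    and t1 :: "real^'n" and t2 :: real
  assumes "prob_space M"
    and "\<sigma> > 0" and "\<alpha> > 0"
    and "pos_def_mat Q11" and "Q22 > 0"
    and "distributed M lborel Z1 (\<lambda>x. ennreal (\<Prod>i\<in>UNIV. normal_density 0 \<sigma> (x $ i)))"
    and "distributed M lborel Z2 (\<lambda>x. ennreal (normal_density 0 \<sigma> x))"
    and "\<forall>A \<in> sets borel. \<forall>B \<in> sets borel.
           measure M (Z1 -` A \<inter> Z2 -` B \<inter> space M)
             = measure M (Z1 -` A \<inter> space M) * measure M (Z2 -` B \<inter> space M)"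
  shows "((\<lambda>\<gamma>. F_inf M Z1 Z2 Q11 Q22 \<sigma> \<alpha> \<gamma> t1 t2) \<longlongrightarrow>
            measure M {\<omega> \<in> space M. \<forall>i. (mat_inv_sqrt Q11 *v Z1 \<omega>) $ i \<le> t1 $ i}
          * measure M {\<omega> \<in> space M. Z2 \<omega> / sqrt Q22 \<le> t2}) at_infinity
    \<and> (\<exists>\<gamma>. F_inf M Z1 Z2 Q11 Q22 \<sigma> \<alpha> \<gamma> t1 t2 \<noteq>
            measure M {\<omega> \<in> space M. \<forall>i. (mat_inv_sqrt Q11 *v Z1 \<omega>) $ i \<le> t1 $ i}
          * measure M {\<omega> \<in> space M. Z2 \<omega> / sqrt Q22 \<le> t2})"
proof -
  define N where "N = density lborel (\<lambda>x. ennreal (normal_density 0 \<sigma> x))"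
  define P where "P = measure M {\<omega> \<in> space M. \<forall>i. (mat_inv_sqrt Q11 *v Z1 \<omega>) $ i \<le> t1 $ i}"
  define G where "G \<gamma> = measure N {z. last_coordinate \<alpha> \<sigma> Q22 \<gamma> z \<le> t2}" for \<gamma>
  define G_lim where "G_lim = measure N {z. z / sqrt Q22 \<le> t2}"
  have F: "F_inf M Z1 Z2 Q11 Q22 \<sigma> \<alpha> \<gamma> t1 t2 = P * G \<gamma>" for \<gamma>
    unfolding P_def G_def N_def by (rule F_inf_eq_mult[OF assms(7,8)])
  have "{z. z / sqrt Q22 \<le> t2} \<in> sets lborel"
    by measurable
  from measure_distributed[OF assms(7) this]
  have G_lim_eq: "measure M {\<omega> \<in> space M. Z2 \<omega> / sqrt Q22 \<le> t2} = G_lim"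
    unfolding G_lim_def N_def by simp
  have "P > 0"
    unfolding P_def using assms(2)
    by (intro measure_lower_orthant_pos[OF assms(1,6)] surj_mat_inv_sqrt[OF assms(4)] prod_pos)
       (auto simp: normal_density_pos)
  moreover have "(G \<longlongrightarrow> G_lim) at_infinity"
    unfolding G_def G_lim_def N_def using assms(3,2,5,2)
    by (rule normal_measure_last_coordinate_tendsto)
  moreover obtain \<gamma> where "G_lim < G \<gamma>"
    unfolding G_def G_lim_def N_def using normal_measure_last_coordinate_gap[OF assms(5,2)] by blast
  ultimately show ?thesis
    unfolding F G_lim_eq P_def[symmetric] by (auto intro: tendsto_mult_left)
qed

end
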